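(* Let $\rho$ be a $d$-dimensional state with $\Delta(\rho)>0$. Then \[ l(\rho)=\max_{i\in[d]}\big|\{j\in[d]:\ |R^\rho_{ij}|=1\}\big| . \]
   Context: Fixed computational basis; $\Delta$ the dephasing map; $\Pi_I=\sum_{i\in I}|i\rangle\langle i|$; $R^\rho=\Delta(\rho)^{-1/2}\rho\Delta(\rho)^{-1/2}$. $l(\rho)=\max\{\mathrm{rk}(\Pi_I\Delta(\rho)\Pi_I):\ I\subseteq[d],\ \mathrm{rk}(\Pi_I\rho\Pi_I)=1\}$. *)

theory Defs
  imports "Jordan_Normal_Form.DL_Rank"
begin

text \<open>Matrices are d x d complex matrices indexed by 0..<d (so [d] = {0..<d}).\<close>

definition quad_form :: "complex mat \<Rightarrow> complex vec \<Rightarrow> complex" where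
  "quad_form A v = conjugate v \<bullet> (A *\<^sub>v v)"

definition hermitian_mat :: "nat \<Rightarrow> complex mat \<Rightarrow> bool" where
  "hermitian_mat d A \<longleftrightarrow> A \<in> carrier_mat d d \<and>
     (\<forall>i<d. \<forall>j<d. A $$ (i, j) = cnj (A $$ (j, i)))"

definition psd_mat :: "nat \<Rightarrow> complex mat \<Rightarrow> bool" where
  "psd_mat d A \<longleftrightarrow> hermitian_mat d A \<and>
     (\<forall>v\<in>carrier_vec d. Im (quad_form A v) = 0 \<and> Re (quad_form A v) \<ge> 0)"

definition pd_mat :: "nat \<Rightarrow> complex mat \<Rightarrow> bool" where
  "pd_mat d A \<longleftrightarrow> hermitian_mat d A \<and>
     (\<forall>v\<in>carrier_vec d. v \<noteq> 0\<^sub>v d \<longrightarrow> Im (quad_form A v) = 0 \<and> Re (quad_form A v) > 0)"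

definition density_mat :: "nat \<Rightarrow> complex mat \<Rightarrow> bool" where
  "density_mat d \<rho> \<longleftrightarrow> psd_mat d \<rho> \<and> (\<Sum>i<d. \<rho> $$ (i, i)) = 1"

definition dephase :: "nat \<Rightarrow> complex mat \<Rightarrow> complex mat" where
  "dephase d \<rho> = mat d d (\<lambda>(i, j). if i = j then \<rho> $$ (i, i) else 0)"

definition proj :: "nat \<Rightarrow> nat set \<Rightarrow> complex mat" where
  "proj d I = mat d d (\<lambda>(i, j). if i = j \<and> i \<in> I then 1 else 0)"

text \<open>Delta(rho)^(-1/2): for the (positive definite) diagonal matrix Delta(rho) this is the
  diagonal matrix with entries 1/sqrt(rho_ii).\<close>
definition dephase_inv_sqrt :: "nat \<Rightarrow> complex mat \<Rightarrow> complex mat" where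
  "dephase_inv_sqrt d \<rho> =
     mat d d (\<lambda>(i, j). if i = j then complex_of_real (1 / sqrt (Re (\<rho> $$ (i, i)))) else 0)"

definition Rmat :: "nat \<Rightarrow> complex mat \<Rightarrow> complex mat" where
  "Rmat d \<rho> = dephase_inv_sqrt d \<rho> * \<rho> * dephase_inv_sqrt d \<rho>"

definition mrank :: "nat \<Rightarrow> complex mat \<Rightarrow> nat" where
  "mrank d A = vec_space.rank d A"

definition l_val :: "nat \<Rightarrow> complex mat \<Rightarrow> nat" where
  "l_val d \<rho> = Max {mrank d (proj d I * dephase d \<rho> * proj d I) | I.
       I \<subseteq> {0..<d} \<and> mrank d (proj d I * \<rho> * proj d I) = 1}"

end

theory Submission
  imports Defs "Jordan_Normal_Form.DL_Rank_Submatrix"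
begin

text \<open>Call i and j coherent if the principal 2 x 2 minor of \<rho> on {i, j} vanishes; since \<rho> is
  positive semidefinite with positive diagonal this says exactly |R_ij| = 1. Positivity also lets a
  vanishing minor propagate: if i is coherent with k then \<rho>_kk \<rho>_ij = \<rho>_ik \<rho>_kj for every j, so
  coherence is an equivalence relation. The compression \<Pi>_I \<rho> \<Pi>_I has rank one exactly when I is
  a nonempty set of pairwise coherent indices (all its 2 x 2 minors vanish and its rows are
  multiples of row k), while \<Pi>_I \<Delta>(\<rho>) \<Pi>_I always has rank |I|. Hence l(\<rho>) is the size of
  the largest coherence class, and the class of i is the set of j with |R_ij| = 1.\<close>

definition mat_diag :: "nat \<Rightarrow> (nat \<Rightarrow> 'a::zero) \<Rightarrow> 'a mat" where
  "mat_diag d s = mat d d (\<lambda>(i, j). if i = j then s i else 0)"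

lemma mat_diag_mult_left:
  fixes A :: "'a::semiring_0 mat"
  assumes "A \<in> carrier_mat d d"
  shows "mat_diag d s * A = mat d d (\<lambda>(i, j). s i * A $$ (i, j))"
  using assms
  by (intro eq_matI) (auto simp: mat_diag_def scalar_prod_def if_distrib[of "\<lambda>x. x * _"] sum.delta cong: if_cong)

lemma mat_diag_mult_right:
  fixes A :: "'a::semiring_0 mat"
  assumes "A \<in> carrier_mat d d"
  shows "A * mat_diag d s = mat d d (\<lambda>(i, j). A $$ (i, j) * s j)"
  using assms
  by (intro eq_matI) (auto simp: mat_diag_def scalar_prod_def if_distrib[of "\<lambda>x. _ * x"] sum.delta' cong: if_cong)

lemma proj_eq_mat_diag: "proj d I = mat_diag d (\<lambda>i. if i \<in> I then 1 else 0)"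
  by (intro eq_matI) (auto simp: proj_def mat_diag_def)

lemma dephase_eq_mat_diag: "dephase d A = mat_diag d (\<lambda>i. A $$ (i, i))"
  by (intro eq_matI) (auto simp: dephase_def mat_diag_def)

lemma proj_mult_mult_proj:
  assumes "A \<in> carrier_mat d d"
  shows "proj d I * A * proj d I = mat d d (\<lambda>(i, j). if i \<in> I \<and> j \<in> I then A $$ (i, j) else 0)"
  using assms unfolding proj_eq_mat_diag
  by (simp add: mat_diag_mult_left mat_diag_mult_right) (intro eq_matI; auto)

lemma Rmat_index:
  assumes "\<rho> \<in> carrier_mat d d" "i < d" "j < d"
  shows "Rmat d \<rho> $$ (i, j) =
    \<rho> $$ (i, j) / complex_of_real (sqrt (Re (\<rho> $$ (i, i))) * sqrt (Re (\<rho> $$ (j, j))))"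
proof -
  have "dephase_inv_sqrt d \<rho> = mat_diag d (\<lambda>i. complex_of_real (1 / sqrt (Re (\<rho> $$ (i, i)))))"
    by (intro eq_matI) (auto simp: dephase_inv_sqrt_def mat_diag_def)
  then show ?thesis
    using assms by (simp add: Rmat_def mat_diag_mult_left mat_diag_mult_right)
qed

lemma det_2x2:
  assumes "A \<in> carrier_mat 2 2"
  shows "det A = A $$ (0, 0) * A $$ (1, 1) - A $$ (0, 1) * A $$ (1, 0)"
proof -
  have "det A = (\<Sum>j<2. A $$ (0, j) * cofactor A 0 j)"
    using laplace_expansion_row[OF assms, of 0] by simp
  also have "\<dots> = A $$ (0, 0) * cofactor A 0 0 + A $$ (0, 1) * cofactor A 0 1"
    by (simp add: numeral_2_eq_2)
  also have "cofactor A 0 0 = A $$ (1, 1)"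
    unfolding cofactor_def using assms by (subst det_single) (auto simp: mat_delete_def)
  also have "cofactor A 0 1 = - A $$ (1, 0)"
    unfolding cofactor_def using assms by (subst det_single) (auto simp: mat_delete_def)
  finally show ?thesis by (simp add: algebra_simps)
qed

lemma rank_ge_1_of_diag_nonzero:
  fixes A :: "'a::field mat"
  assumes A: "A \<in> carrier_mat d d" and k: "k < d" and nz: "A $$ (k, k) \<noteq> 0"
  shows "1 \<le> vec_space.rank d A"
proof -
  let ?S = "submatrix A {k} {k}"
  have card_k: "card {x. x < d \<and> x \<in> {k}} = 1"
    using k by (simp add: Collect_conv_if)
  have S: "?S \<in> carrier_mat 1 1"
    using dim_submatrix[of A "{k}" "{k}"] carrier_matD[OF A] card_k by (metis carrier_matI)
  have "?S $$ (0, 0) = A $$ (k, k)"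
    using submatrix_index_card[of k A k "{k}" "{k}"] A k by (simp add: Collect_conv_if)
  then have "det ?S \<noteq> 0" using det_single[OF S] nz by simp
  from vec_space.rank_gt_minor[OF A this] show ?thesis unfolding card_k .
qed

lemma rank_ge_2_of_principal_minor_nonzero:
  fixes A :: "'a::field mat"
  assumes A: "A \<in> carrier_mat d d" and ij: "i < j" "j < d"
    and nz: "A $$ (i, i) * A $$ (j, j) - A $$ (i, j) * A $$ (j, i) \<noteq> 0"
  shows "2 \<le> vec_space.rank d A"
proof -
  let ?S = "submatrix A {i, j} {i, j}"
  have card_ij: "card {x. x < d \<and> x \<in> {i, j}} = 2"
  proof -
    have "{x. x < d \<and> x \<in> {i, j}} = {i, j}" using ij by auto
    then show ?thesis using ij by simp
  qed
  have S: "?S \<in> carrier_mat 2 2"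
    using dim_submatrix[of A "{i, j}" "{i, j}"] carrier_matD[OF A] card_ij by (metis carrier_matI)
  have below_i: "card {a \<in> {i, j}. a < i} = 0" using ij by auto
  have below_j: "card {a \<in> {i, j}. a < j} = 1"
  proof -
    have "{a \<in> {i, j}. a < j} = {i}" using ij by auto
    then show ?thesis by simp
  qed
  have "?S $$ (0, 0) = A $$ (i, i)" "?S $$ (0, 1) = A $$ (i, j)"
    "?S $$ (1, 0) = A $$ (j, i)" "?S $$ (1, 1) = A $$ (j, j)"
    using submatrix_index_card[of _ A _ "{i, j}" "{i, j}"] A ij
    unfolding below_i[symmetric] below_j[symmetric] by auto
  then have "det ?S \<noteq> 0" using det_2x2[OF S] nz by simp
  from vec_space.rank_gt_minor[OF A this] show ?thesis unfolding card_ij .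
qed

lemma rank_mat_diag_restrict_ge:
  fixes c :: "nat \<Rightarrow> 'a::field"
  assumes I: "I \<subseteq> {0..<d}" and nz: "\<And>i. i \<in> I \<Longrightarrow> c i \<noteq> 0"
  shows "card I \<le> vec_space.rank d (mat_diag d (\<lambda>i. if i \<in> I then c i else 0))"
proof -
  let ?D = "mat_diag d (\<lambda>i. if i \<in> I then c i else 0)"
  let ?S = "submatrix ?D I I"
  have cI: "{x. x < d \<and> x \<in> I} = I" using I by auto
  have S: "?S \<in> carrier_mat (card I) (card I)"
    by (rule carrier_matI) (simp_all only: dim_submatrix mat_diag_def dim_row_mat dim_col_mat cI)
  have pick: "pick I a \<in> I" "pick I a < d" if "a < card I" for a
    using pick_in_set_le[OF that] I by auto
  have pick_inj: "pick I a \<noteq> pick I b" if "a < card I" "b < card I" "a \<noteq> b" for a b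
    using pick_mono_le[OF that(1), of b] pick_mono_le[OF that(2), of a] that by (cases "a < b") auto
  have S_index: "?S $$ (a, b) = (if a = b then c (pick I a) else 0)" if "a < card I" "b < card I" for a b
    using submatrix_index[of a ?D I b I] that cI pick[OF that(1)] pick[OF that(2)] pick_inj[OF that]
    by (auto simp: mat_diag_def)
  have "upper_triangular ?S"
    unfolding upper_triangular_def using S_index S by auto
  then have "det ?S = prod_list (diag_mat ?S)" using det_upper_triangular S by blast
  also have "\<dots> \<noteq> 0"
    unfolding prod_list_zero_iff diag_mat_def using S S_index pick nz by auto
  finally have "det ?S \<noteq> 0" .
  moreover have "?D \<in> carrier_mat d d" by (simp add: mat_diag_def)
  ultimately show ?thesis using vec_space.rank_gt_minor[of ?D d d I I] unfolding cI by simp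
qed

lemma rank_mat_diag_restrict_le:
  fixes c :: "nat \<Rightarrow> 'a::field"
  assumes "finite I"
  shows "vec_space.rank d (mat_diag d (\<lambda>i. if i \<in> I then c i else 0)) \<le> card I"
  using assms
proof (induction I rule: finite_induct)
  case empty
  have "mat_diag d (\<lambda>i. if i \<in> {} then c i else 0) = 0\<^sub>m d d"
    by (intro eq_matI) (auto simp: mat_diag_def)
  then show ?case using vec_space.rank_0I by (metis le_refl card.empty)
next
  case (insert x F)
  let ?D = "\<lambda>I. mat_diag d (\<lambda>i. if i \<in> I then c i else 0)"
  have split: "?D (insert x F) = ?D F + ?D {x}"
    using insert by (intro eq_matI) (auto simp: mat_diag_def)
  have "vec_space.rank d (?D {x}) \<le> 1"
    by (rule vec_space.rank_le_1_product_entries[where f = "\<lambda>r. if r = x then c x else 0"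
          and g = "\<lambda>r. if r = x then 1 else 0" and nc = d]) (auto simp: mat_diag_def)
  moreover have "vec_space.rank d (?D F + ?D {x}) \<le> vec_space.rank d (?D F) + vec_space.rank d (?D {x})"
    by (rule vec_space.rank_subadditive) (auto simp: mat_diag_def)
  ultimately show ?case using insert split by simp
qed

definition sesq_form :: "nat \<Rightarrow> complex mat \<Rightarrow> (nat \<Rightarrow> complex) \<Rightarrow> (nat \<Rightarrow> complex) \<Rightarrow> complex" where
  "sesq_form d A f g = (\<Sum>l<d. \<Sum>m<d. cnj (f l) * A $$ (l, m) * g m)"

lemma psd_mat_carrier: "psd_mat d A \<Longrightarrow> A \<in> carrier_mat d d"
  by (simp add: psd_mat_def hermitian_mat_def)

lemma quad_form_vec:
  assumes "A \<in> carrier_mat d d"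
  shows "quad_form A (vec d f) = sesq_form d A f f"
  using assms unfolding quad_form_def sesq_form_def
  by (auto simp: scalar_prod_def sum_distrib_left mult.assoc lessThan_atLeast0 intro!: sum.cong)

lemma quad_form_unit_vec:
  assumes "A \<in> carrier_mat d d" "i < d"
  shows "quad_form A (unit_vec d i) = A $$ (i, i)"
  using assms
  by (simp add: unit_vec_def quad_form_vec sesq_form_def if_distrib[of "\<lambda>x. x * _"]
      if_distrib[of "\<lambda>x. _ * x"] if_distrib[of cnj] cong: if_cong)

lemma psd_sesq_form_diag:
  assumes "psd_mat d A"
  shows "sesq_form d A f f \<in> \<real>" "Re (sesq_form d A f f) \<ge> 0"
proof -
  have "quad_form A (vec d f) = sesq_form d A f f"
    using quad_form_vec[OF psd_mat_carrier[OF assms]] .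
  then show "sesq_form d A f f \<in> \<real>" "Re (sesq_form d A f f) \<ge> 0"
    using assms unfolding psd_mat_def complex_is_Real_iff by (metis vec_carrier)+
qed

lemma sesq_form_add_scaled:
  "sesq_form d A (\<lambda>l. u l + t * y l) (\<lambda>m. u m + t * y m) =
   sesq_form d A u u + t * sesq_form d A u y + cnj t * sesq_form d A y u + cnj t * t * sesq_form d A y y"
  unfolding sesq_form_def by (simp add: algebra_simps sum.distrib sum_distrib_left)

lemma hermitian_sesq_form_swap:
  assumes "hermitian_mat d A"
  shows "sesq_form d A y u = cnj (sesq_form d A u y)"
proof -
  have "cnj (sesq_form d A u y) = (\<Sum>l<d. \<Sum>m<d. u l * cnj (A $$ (l, m)) * cnj (y m))"
    unfolding sesq_form_def by simp
  also have "\<dots> = (\<Sum>l<d. \<Sum>m<d. cnj (y m) * A $$ (m, l) * u l)"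
  proof (intro sum.cong refl)
    fix l m assume "l \<in> {..<d}" "m \<in> {..<d}"
    then have "A $$ (m, l) = cnj (A $$ (l, m))"
      using assms unfolding hermitian_mat_def by blast
    then show "u l * cnj (A $$ (l, m)) * cnj (y m) = cnj (y m) * A $$ (m, l) * u l"
      by (simp add: mult_ac)
  qed
  also have "\<dots> = sesq_form d A y u"
    unfolding sesq_form_def by (rule sum.swap)
  finally show ?thesis by simp
qed

text \<open>A nonnegative form vanishing at u vanishes on the whole line through u: evaluate it at
  u + t y with t = - cnj c / (b + 1), where c = B(u, y) and b = B(y, y).\<close>
lemma psd_sesq_form_eq_0:
  assumes psd: "psd_mat d A" and zero: "sesq_form d A u u = 0"
  shows "sesq_form d A u y = 0"
proof -
  define c where "c = sesq_form d A u y"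
  define b where "b = Re (sesq_form d A y y)"
  define n where "n = cmod c ^ 2"
  define t where "t = - cnj c / of_real (b + 1)"
  have b: "sesq_form d A y y = of_real b" "b \<ge> 0"
    using psd_sesq_form_diag[OF psd, of y] unfolding b_def by (auto simp: complex_is_Real_iff complex_eq_iff)
  have c: "c * cnj c = of_real n"
    unfolding n_def by (rule complex_norm_square[symmetric])
  have "sesq_form d A (\<lambda>l. u l + t * y l) (\<lambda>m. u m + t * y m) = t * c + cnj t * cnj c + cnj t * t * of_real b"
    using sesq_form_add_scaled[of d A u t y] zero b(1)
      hermitian_sesq_form_swap[of d A y u] psd unfolding c_def psd_mat_def by simp
  also have "\<dots> = of_real (- n * (b + 2) / (b + 1) ^ 2)"
  proof -
    have "b + 1 \<noteq> 0" using b(2) by simp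
    have "t * c = of_real (- n / (b + 1))" "cnj t * cnj c = of_real (- n / (b + 1))"
      "cnj t * t = of_real (n / (b + 1) ^ 2)"
      unfolding t_def using c by (simp_all add: mult.commute power2_eq_square)
    then have "t * c + cnj t * cnj c + cnj t * t * of_real b = of_real (- n / (b + 1) - n / (b + 1) + n / (b + 1) ^ 2 * b)"
      by simp
    also have "- n / (b + 1) - n / (b + 1) + n / (b + 1) ^ 2 * b = - n * (b + 2) / (b + 1) ^ 2"
      using \<open>b + 1 \<noteq> 0\<close> by (simp add: divide_simps power2_eq_square) (simp add: algebra_simps)
    finally show ?thesis .
  qed
  finally have "- n * (b + 2) / (b + 1) ^ 2 \<ge> 0"
    using psd_sesq_form_diag(2)[OF psd, of "\<lambda>l. u l + t * y l"] by simp
  then have "n * (b + 2) \<le> 0"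
    using b(2) by (simp add: divide_nonneg_pos field_simps)
  then have "n = 0"
    using b(2) unfolding n_def by (smt (verit) mult_pos_pos zero_le_power2)
  then show ?thesis unfolding n_def c_def by simp
qed

lemma sum_combination_deltas:
  fixes X :: "nat \<Rightarrow> complex"
  assumes "p < d" "q < d"
  shows "(\<Sum>l<d. X l * (a * (if l = p then 1 else 0) + b * (if l = q then 1 else 0))) = a * X p + b * X q"
  using assms by (simp add: distrib_left sum.distrib if_distrib[of "\<lambda>x. _ * x"] mult.commute cong: if_cong)

lemma sesq_form_left_combination:
  assumes "p < d" "q < d"
  shows "sesq_form d A (\<lambda>l. a * (if l = p then 1 else 0) + b * (if l = q then 1 else 0)) g =
    cnj a * (\<Sum>m<d. A $$ (p, m) * g m) + cnj b * (\<Sum>m<d. A $$ (q, m) * g m)"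
proof -
  have "sesq_form d A (\<lambda>l. a * (if l = p then 1 else 0) + b * (if l = q then 1 else 0)) g =
     (\<Sum>l<d. (\<Sum>m<d. A $$ (l, m) * g m) * (cnj a * (if l = p then 1 else 0) + cnj b * (if l = q then 1 else 0)))"
    unfolding sesq_form_def by (intro sum.cong refl) (simp add: sum_distrib_left sum_distrib_right mult_ac)
  also have "\<dots> = cnj a * (\<Sum>m<d. A $$ (p, m) * g m) + cnj b * (\<Sum>m<d. A $$ (q, m) * g m)"
    by (rule sum_combination_deltas[OF assms])
  finally show ?thesis .
qed

definition coherent :: "complex mat \<Rightarrow> nat \<Rightarrow> nat \<Rightarrow> bool" where
  "coherent A i j \<longleftrightarrow> A $$ (i, j) * A $$ (j, i) = A $$ (i, i) * A $$ (j, j)"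

text \<open>The vector u = A_kk e_i - A_ki e_k has B(u, u) = 0 by coherence, hence B(u, e_j) = 0,
  which is the conjugate of the claim.\<close>
lemma psd_coherent_factor:
  assumes psd: "psd_mat d A" and ijk: "i < d" "j < d" "k < d" and "coherent A i k"
  shows "A $$ (k, k) * A $$ (i, j) = A $$ (i, k) * A $$ (k, j)"
proof -
  have herm: "cnj (A $$ (a, b)) = A $$ (b, a)" if "a < d" "b < d" for a b
    using psd that unfolding psd_mat_def hermitian_mat_def by (metis complex_cnj_cnj)
  define u where "u = (\<lambda>l. A $$ (k, k) * (if l = i then 1 else 0) + (- A $$ (k, i)) * (if l = k then 1 else 0))"
  have B_u: "sesq_form d A u g = cnj (A $$ (k, k)) * (\<Sum>m<d. A $$ (i, m) * g m)
      - cnj (A $$ (k, i)) * (\<Sum>m<d. A $$ (k, m) * g m)" for g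
    unfolding u_def sesq_form_left_combination[OF ijk(1) ijk(3)] by simp
  have A_u: "(\<Sum>m<d. A $$ (p, m) * u m) = A $$ (k, k) * A $$ (p, i) - A $$ (k, i) * A $$ (p, k)" for p
    unfolding u_def sum_combination_deltas[OF ijk(1) ijk(3)] by simp
  have "sesq_form d A u u = 0"
    using \<open>coherent A i k\<close> unfolding B_u A_u coherent_def by (simp add: algebra_simps)
  then have "sesq_form d A u (\<lambda>m. if m = j then 1 else 0) = 0"
    by (rule psd_sesq_form_eq_0[OF psd])
  then have "cnj (A $$ (k, k)) * A $$ (i, j) - cnj (A $$ (k, i)) * A $$ (k, j) = 0"
    unfolding B_u using ijk(2) by (simp add: if_distrib[of "\<lambda>x. _ * x"] cong: if_cong)
  then show ?thesis using herm[OF ijk(3) ijk(3)] herm[OF ijk(3) ijk(1)] by simp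
qed

lemma coherent_refl: "coherent A i i"
  by (simp add: coherent_def)

lemma coherent_sym: "coherent A i j \<Longrightarrow> coherent A j i"
  by (simp add: coherent_def mult.commute)

lemma psd_coherent_trans:
  assumes psd: "psd_mat d A" and ijk: "i < d" "j < d" "k < d" and nz: "A $$ (j, j) \<noteq> 0"
    and ij: "coherent A i j" and jk: "coherent A j k"
  shows "coherent A i k"
proof -
  have ik: "A $$ (j, j) * A $$ (i, k) = A $$ (i, j) * A $$ (j, k)"
    using psd_coherent_factor[OF psd ijk(1,3,2) ij] .
  have ki: "A $$ (j, j) * A $$ (k, i) = A $$ (k, j) * A $$ (j, i)"
    using psd_coherent_factor[OF psd ijk(3,1,2) coherent_sym[OF jk]] .
  have "(A $$ (j, j) * A $$ (j, j)) * (A $$ (i, k) * A $$ (k, i))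
      = (A $$ (i, j) * A $$ (j, i)) * (A $$ (j, k) * A $$ (k, j))"
    using arg_cong2[OF ik ki, of "(*)"] by (simp add: mult_ac)
  also have "\<dots> = (A $$ (j, j) * A $$ (j, j)) * (A $$ (i, i) * A $$ (k, k))"
    using ij jk unfolding coherent_def by (simp add: mult_ac)
  finally show ?thesis
    unfolding coherent_def using nz by simp
qed

lemma rank_compress_ge_1:
  assumes A: "A \<in> carrier_mat d d" and "k \<in> I" "k < d" and "A $$ (k, k) \<noteq> 0"
  shows "1 \<le> vec_space.rank d (proj d I * A * proj d I)"
  by (rule rank_ge_1_of_diag_nonzero[of _ d k]) (use assms in \<open>simp_all add: proj_mult_mult_proj\<close>)

lemma coherent_of_rank_compress_le_1:
  assumes A: "A \<in> carrier_mat d d" and I: "I \<subseteq> {0..<d}"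
    and rank: "vec_space.rank d (proj d I * A * proj d I) \<le> 1"
    and "i \<in> I" "j \<in> I"
  shows "coherent A i j"
proof -
  have "coherent A i j" if "i \<in> I" "j \<in> I" "i < j" for i j
  proof (rule ccontr)
    assume "\<not> coherent A i j"
    then have "2 \<le> vec_space.rank d (proj d I * A * proj d I)"
      using that I by (intro rank_ge_2_of_principal_minor_nonzero[of _ d i j])
        (auto simp: proj_mult_mult_proj[OF A] coherent_def)
    then show False using rank by simp
  qed
  then show ?thesis
    using \<open>i \<in> I\<close> \<open>j \<in> I\<close> coherent_refl coherent_sym by (metis linorder_neqE_nat)
qed

lemma rank_compress_le_1_of_coherent:
  assumes psd: "psd_mat d A" and I: "I \<subseteq> {0..<d}" and k: "k \<in> I" and nz: "A $$ (k, k) \<noteq> 0"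
    and coh: "\<And>i. i \<in> I \<Longrightarrow> coherent A i k"
  shows "vec_space.rank d (proj d I * A * proj d I) \<le> 1"
proof -
  have A: "A \<in> carrier_mat d d" using psd by (rule psd_mat_carrier)
  have "k < d" using I k by auto
  show ?thesis
  proof (rule vec_space.rank_le_1_product_entries[where f = "\<lambda>r. if r \<in> I then A $$ (r, k) else 0"
        and g = "\<lambda>c. if c \<in> I then A $$ (k, c) / A $$ (k, k) else 0"])
    show "proj d I * A * proj d I \<in> carrier_mat d d"
      using A by (simp add: proj_mult_mult_proj)
    fix r c assume "r < dim_row (proj d I * A * proj d I)" "c < dim_col (proj d I * A * proj d I)"
    then have rc: "r < d" "c < d" using A by (simp_all add: proj_mult_mult_proj)
    have "A $$ (k, k) * A $$ (r, c) = A $$ (r, k) * A $$ (k, c)" if "r \<in> I"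
      using psd_coherent_factor[OF psd rc \<open>k < d\<close> coh[OF that]] .
    then show "(proj d I * A * proj d I) $$ (r, c) =
        (if r \<in> I then A $$ (r, k) else 0) * (if c \<in> I then A $$ (k, c) / A $$ (k, k) else 0)"
      using rc nz by (auto simp: proj_mult_mult_proj[OF A] field_simps)
  qed
qed

lemma rank_compress_eq_1_iff:
  assumes psd: "psd_mat d A" and nz: "\<And>i. i < d \<Longrightarrow> A $$ (i, i) \<noteq> 0" and I: "I \<subseteq> {0..<d}"
  shows "mrank d (proj d I * A * proj d I) = 1 \<longleftrightarrow> I \<noteq> {} \<and> (\<forall>i\<in>I. \<forall>j\<in>I. coherent A i j)"
proof
  have A: "A \<in> carrier_mat d d" using psd by (rule psd_mat_carrier)
  assume rank: "mrank d (proj d I * A * proj d I) = 1"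
  have "I \<noteq> {}"
  proof
    assume "I = {}"
    then have "proj d I * A * proj d I = 0\<^sub>m d d"
      using A by (intro eq_matI) (auto simp: proj_mult_mult_proj)
    then show False using rank unfolding mrank_def by (metis vec_space.rank_0I zero_neq_one)
  qed
  then show "I \<noteq> {} \<and> (\<forall>i\<in>I. \<forall>j\<in>I. coherent A i j)"
    using coherent_of_rank_compress_le_1[OF A I] rank unfolding mrank_def by simp
next
  assume "I \<noteq> {} \<and> (\<forall>i\<in>I. \<forall>j\<in>I. coherent A i j)"
  then obtain k where k: "k \<in> I" and coh: "\<forall>i\<in>I. coherent A i k" by blast
  have "k < d" using k I by auto
  show "mrank d (proj d I * A * proj d I) = 1"
    using rank_compress_ge_1[OF psd_mat_carrier[OF psd] k \<open>k < d\<close> nz[OF \<open>k < d\<close>]]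
      rank_compress_le_1_of_coherent[OF psd I k nz[OF \<open>k < d\<close>]] coh
    unfolding mrank_def by simp
qed

lemma rank_compress_dephase:
  assumes I: "I \<subseteq> {0..<d}" and nz: "\<And>i. i \<in> I \<Longrightarrow> A $$ (i, i) \<noteq> 0"
  shows "mrank d (proj d I * dephase d A * proj d I) = card I"
proof -
  have dephase_carrier: "dephase d A \<in> carrier_mat d d" by (simp add: dephase_def)
  have "proj d I * dephase d A * proj d I = mat_diag d (\<lambda>i. if i \<in> I then A $$ (i, i) else 0)"
    unfolding proj_mult_mult_proj[OF dephase_carrier]
    by (intro eq_matI) (auto simp: dephase_eq_mat_diag mat_diag_def)
  moreover have "finite I" using I finite_subset by blast
  ultimately show ?thesis
    unfolding mrank_def
    using rank_mat_diag_restrict_le[where c = "\<lambda>i. A $$ (i, i)"]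
      rank_mat_diag_restrict_ge[where c = "\<lambda>i. A $$ (i, i)", OF I nz]
    by (simp add: le_antisym)
qed

lemma pd_dephase_diag_pos:
  assumes "pd_mat d (dephase d A)" "i < d"
  shows "Re (A $$ (i, i)) > 0"
proof -
  have "Re (quad_form (dephase d A) (unit_vec d i)) > 0"
    using assms unfolding pd_mat_def by simp
  then show ?thesis
    using assms(2) by (simp add: quad_form_unit_vec dephase_def)
qed

lemma hermitian_diag_real:
  assumes "hermitian_mat d A" "i < d"
  shows "A $$ (i, i) = of_real (Re (A $$ (i, i)))"
  using assms unfolding hermitian_mat_def by (metis Reals_cnj_iff complex_is_Real_iff of_real_Re)

lemma cmod_Rmat_eq_1_iff:
  assumes herm: "hermitian_mat d A" and pos: "\<And>i. i < d \<Longrightarrow> Re (A $$ (i, i)) > 0"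
    and ij: "i < d" "j < d"
  shows "cmod (Rmat d A $$ (i, j)) = 1 \<longleftrightarrow> coherent A i j"
proof -
  define p where "p i = Re (A $$ (i, i))" for i
  have p: "p i > 0" "p j > 0" using pos ij unfolding p_def by auto
  have A: "A \<in> carrier_mat d d" using herm unfolding hermitian_mat_def by blast
  have "cmod (Rmat d A $$ (i, j)) = cmod (A $$ (i, j)) / sqrt (p i * p j)"
    using p unfolding Rmat_index[OF A ij] p_def by (simp add: norm_divide norm_mult real_sqrt_mult)
  then have "cmod (Rmat d A $$ (i, j)) = 1 \<longleftrightarrow> cmod (A $$ (i, j)) = sqrt (p i * p j)"
    using p by auto
  also have "\<dots> \<longleftrightarrow> cmod (A $$ (i, j)) ^ 2 = p i * p j"
    using p real_sqrt_unique[of "cmod (A $$ (i, j))" "p i * p j"] by auto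
  also have "\<dots> \<longleftrightarrow> coherent A i j"
  proof -
    have "A $$ (j, i) = cnj (A $$ (i, j))"
      using herm ij unfolding hermitian_mat_def by blast
    then have "A $$ (i, j) * A $$ (j, i) = of_real (cmod (A $$ (i, j)) ^ 2)"
      using complex_norm_square[of "A $$ (i, j)"] by simp
    moreover have "A $$ (i, i) * A $$ (j, j) = of_real (p i * p j)"
      using hermitian_diag_real[OF herm] ij unfolding p_def by (metis of_real_mult)
    ultimately show ?thesis unfolding coherent_def by (metis of_real_eq_iff)
  qed
  finally show ?thesis .
qed

lemma Max_card_cliques_eq_Max_card_classes:
  fixes R :: "'a \<Rightarrow> 'a \<Rightarrow> bool"
  assumes fin: "finite A"
    and refl: "\<And>i. i \<in> A \<Longrightarrow> R i i" and sym: "\<And>i j. R i j \<Longrightarrow> R j i"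
    and trans: "\<And>i j k. i \<in> A \<Longrightarrow> j \<in> A \<Longrightarrow> k \<in> A \<Longrightarrow> R i j \<Longrightarrow> R j k \<Longrightarrow> R i k"
  shows "Max (card ` {I. I \<subseteq> A \<and> I \<noteq> {} \<and> (\<forall>i\<in>I. \<forall>j\<in>I. R i j)}) =
    Max ((\<lambda>i. card {j \<in> A. R i j}) ` A)"
    (is "Max ?cliques = Max ?classes")
proof (rule Max_eq_if)
  show "finite ?cliques"
    using fin by simp
  show "finite ?classes"
    using fin by simp
  show "\<forall>x\<in>?cliques. \<exists>y\<in>?classes. x \<le> y"
  proof
    fix x assume "x \<in> ?cliques"
    then obtain I where I: "x = card I" "I \<subseteq> A" "I \<noteq> {}" "\<forall>a\<in>I. \<forall>b\<in>I. R a b"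
      by blast
    then obtain i where "i \<in> I" by blast
    have "I \<subseteq> {j \<in> A. R i j}" using I \<open>i \<in> I\<close> by blast
    then have "x \<le> card {j \<in> A. R i j}"
      using fin I(1) by (simp add: card_mono)
    then show "\<exists>y\<in>?classes. x \<le> y"
      using \<open>i \<in> I\<close> I(2) by blast
  qed
  show "\<forall>y\<in>?classes. \<exists>x\<in>?cliques. y \<le> x"
  proof
    fix y assume "y \<in> ?classes"
    then obtain i where i: "i \<in> A" and y: "y = card {j \<in> A. R i j}" by blast
    have "R a b" if "a \<in> {j \<in> A. R i j}" "b \<in> {j \<in> A. R i j}" for a b
      using that i sym trans[of a i b] by simp
    moreover have "{j \<in> A. R i j} \<noteq> {}" using i refl by blast
    ultimately have "y \<in> ?cliques" unfolding y by blast
    then show "\<exists>x\<in>?cliques. y \<le> x" by blast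
  qed
qed

theorem lemma5:
  fixes d :: nat and \<rho> :: "complex mat"
  assumes "density_mat d \<rho>"
    and "pd_mat d (dephase d \<rho>)"
  shows "l_val d \<rho> = Max ((\<lambda>i. card {j \<in> {0..<d}. cmod (Rmat d \<rho> $$ (i, j)) = 1}) ` {0..<d})"
proof -
  have psd: "psd_mat d \<rho>" using assms(1) unfolding density_mat_def by blast
  have herm: "hermitian_mat d \<rho>" using psd unfolding psd_mat_def by blast
  have pos: "Re (\<rho> $$ (i, i)) > 0" if "i < d" for i
    using pd_dephase_diag_pos[OF assms(2) that] .
  then have nz: "\<rho> $$ (i, i) \<noteq> 0" if "i < d" for i
    using that by fastforce
  have "{I. I \<subseteq> {0..<d} \<and> mrank d (proj d I * \<rho> * proj d I) = 1} =
      {I. I \<subseteq> {0..<d} \<and> I \<noteq> {} \<and> (\<forall>i\<in>I. \<forall>j\<in>I. coherent \<rho> i j)}" (is "_ = ?cliques")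
    using rank_compress_eq_1_iff[OF psd nz] by blast
  then have "l_val d \<rho> = Max ((\<lambda>I. mrank d (proj d I * dephase d \<rho> * proj d I)) ` ?cliques)"
    unfolding l_val_def setcompr_eq_image by simp
  also have "\<dots> = Max (card ` ?cliques)"
  proof (intro arg_cong[of _ _ Max] image_cong refl)
    fix I assume "I \<in> ?cliques"
    then show "mrank d (proj d I * dephase d \<rho> * proj d I) = card I"
      using nz by (intro rank_compress_dephase) auto
  qed
  also have "\<dots> = Max ((\<lambda>i. card {j \<in> {0..<d}. coherent \<rho> i j}) ` {0..<d})"
  proof (rule Max_card_cliques_eq_Max_card_classes)
    fix i j k assume "i \<in> {0..<d}" "j \<in> {0..<d}" "k \<in> {0..<d}" "coherent \<rho> i j" "coherent \<rho> j k"
    then show "coherent \<rho> i k" using psd_coherent_trans[OF psd, of i j k] nz[of j] by simp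
  qed (simp_all add: coherent_refl coherent_sym)
  also have "\<dots> = Max ((\<lambda>i. card {j \<in> {0..<d}. cmod (Rmat d \<rho> $$ (i, j)) = 1}) ` {0..<d})"
    using cmod_Rmat_eq_1_iff[OF herm pos] by (intro arg_cong[of _ _ Max] image_cong refl arg_cong[of _ _ card]) auto
  finally show ?thesis .
qed

end
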